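(* Let $R$ be a commutative multiplicative hyperring with identity, let $\alpha$ be a good endomorphism of $R$, and let $I$ be an $\alpha$-prime hyperideal of $R$. If $x\in R$ and $x^n\subseteq I$ for some $n\in\mathbb N$, then $\alpha(x)\in I$.
   Context: A multiplicative hyperring is an abelian group $(R,+)$ with a hyperoperation $\circ:R\times R\to \mathcal P^*(R)$ (nonempty subsets) such that $a\circ(b\circ c)=(a\circ b)\circ c$, $a\circ(b+c)\subseteq a\circ b+a\circ c$, $(b+c)\circ a\subseteq b\circ a+c\circ a$, and $a\circ(-b)=(-a)\circ b=-(a\circ b)$. Products of subsets are unions of elementwise products, and $x^n=x\circ\cdots\circ x$ ($n$ factors). Commutative means $a\circ b=b\circ a$. An identity $1$ satisfies $a\in1\circ a$ for all $a$. A hyperideal is a nonempty $I\subseteq R$ closed under subtraction with $r\circ x\subseteq I$ for $r\in R$, $x\in I$. Standing assumption: every hyperideal is a $\mathbf C$-hyperideal, i.e. for every finite product $A=r_1\circ\cdots\circ r_n$, $A\cap I\ne\emptyset$ implies $A\subseteq I$. A good endomorphism $\alpha$ satisfies $\alpha(x+y)=\alpha(x)+\alpha(y)$ and $\alpha(x\circ y)=\alpha(x)\circ\alpha(y)$. A hyperideal $I$ is $\alpha$-prime if for all $x,y$, $x\circ y\subseteq I$ implies $x\in I$ or $\alpha(y)\in I$. *)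

theory Defs
  imports Main
begin

text \<open>A multiplicative hyperring: the abelian group (R,+) is the ambient type
  'a :: ab_group_add, and the hyperoperation is m :: 'a => 'a => 'a set.\<close>

definition hset_prod :: "('a \<Rightarrow> 'a \<Rightarrow> 'a set) \<Rightarrow> 'a set \<Rightarrow> 'a set \<Rightarrow> 'a set" where
  "hset_prod m A B = (\<Union>a\<in>A. \<Union>b\<in>B. m a b)"

definition set_add :: "'a::ab_group_add set \<Rightarrow> 'a set \<Rightarrow> 'a set" where
  "set_add A B = {x + y | x y. x \<in> A \<and> y \<in> B}"

definition mult_hyperring :: "('a::ab_group_add \<Rightarrow> 'a \<Rightarrow> 'a set) \<Rightarrow> bool" where
  "mult_hyperring m \<longleftrightarrow>
     (\<forall>a b. m a b \<noteq> {}) \<and>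
     (\<forall>a b c. hset_prod m {a} (m b c) = hset_prod m (m a b) {c}) \<and>
     (\<forall>a b c. m a (b + c) \<subseteq> set_add (m a b) (m a c)) \<and>
     (\<forall>a b c. m (b + c) a \<subseteq> set_add (m b a) (m c a)) \<and>
     (\<forall>a b. m a (- b) = uminus ` (m a b) \<and> m (- a) b = uminus ` (m a b))"

definition hcomm :: "('a \<Rightarrow> 'a \<Rightarrow> 'a set) \<Rightarrow> bool" where
  "hcomm m \<longleftrightarrow> (\<forall>a b. m a b = m b a)"

definition has_identity :: "('a \<Rightarrow> 'a \<Rightarrow> 'a set) \<Rightarrow> bool" where
  "has_identity m \<longleftrightarrow> (\<exists>e. \<forall>a. a \<in> m e a)"

text \<open>hpow_aux m x k = x^(k+1) (k+1 factors).\<close>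
primrec hpow_aux :: "('a \<Rightarrow> 'a \<Rightarrow> 'a set) \<Rightarrow> 'a \<Rightarrow> nat \<Rightarrow> 'a set" where
  "hpow_aux m x 0 = {x}"
| "hpow_aux m x (Suc k) = hset_prod m (hpow_aux m x k) {x}"

text \<open>hpow m x n = x^n for n >= 1 (n factors).\<close>
definition hpow :: "('a \<Rightarrow> 'a \<Rightarrow> 'a set) \<Rightarrow> 'a \<Rightarrow> nat \<Rightarrow> 'a set" where
  "hpow m x n = hpow_aux m x (n - 1)"

fun hlist_prod :: "('a \<Rightarrow> 'a \<Rightarrow> 'a set) \<Rightarrow> 'a list \<Rightarrow> 'a set" where
  "hlist_prod m [] = {}"
| "hlist_prod m [r] = {r}"
| "hlist_prod m (r # rs) = hset_prod m {r} (hlist_prod m rs)"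

definition hyperideal :: "('a::ab_group_add \<Rightarrow> 'a \<Rightarrow> 'a set) \<Rightarrow> 'a set \<Rightarrow> bool" where
  "hyperideal m I \<longleftrightarrow> I \<noteq> {} \<and> (\<forall>x\<in>I. \<forall>y\<in>I. x - y \<in> I) \<and>
     (\<forall>r. \<forall>x\<in>I. m r x \<subseteq> I)"

definition C_hyperideal :: "('a::ab_group_add \<Rightarrow> 'a \<Rightarrow> 'a set) \<Rightarrow> 'a set \<Rightarrow> bool" where
  "C_hyperideal m I \<longleftrightarrow> hyperideal m I \<and>
     (\<forall>rs. rs \<noteq> [] \<longrightarrow> hlist_prod m rs \<inter> I \<noteq> {} \<longrightarrow> hlist_prod m rs \<subseteq> I)"

definition good_endo :: "('a::ab_group_add \<Rightarrow> 'a \<Rightarrow> 'a set) \<Rightarrow> ('a \<Rightarrow> 'a) \<Rightarrow> bool" where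
  "good_endo m \<alpha> \<longleftrightarrow> (\<forall>x y. \<alpha> (x + y) = \<alpha> x + \<alpha> y) \<and>
     (\<forall>x y. \<alpha> ` (m x y) = m (\<alpha> x) (\<alpha> y))"

definition alpha_prime :: "('a::ab_group_add \<Rightarrow> 'a \<Rightarrow> 'a set) \<Rightarrow> ('a \<Rightarrow> 'a) \<Rightarrow> 'a set \<Rightarrow> bool" where
  "alpha_prime m \<alpha> I \<longleftrightarrow> hyperideal m I \<and>
     (\<forall>x y. m x y \<subseteq> I \<longrightarrow> x \<in> I \<or> \<alpha> y \<in> I)"

end

theory Submission
  imports Defs
begin

text \<open>If \<open>x \<in> I\<close>, then \<open>e \<circ> x \<subseteq> I\<close> for the identity \<open>e\<close>, so \<open>\<alpha>-primeness\<close>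
  gives \<open>\<alpha> x \<in> I\<close> unless \<open>e \<in> I\<close>, in which case \<open>\<alpha> x \<in> \<alpha> x \<circ> e \<subseteq> I\<close> anyway.
  For powers, \<open>x\<^sup>k\<^sup>+\<^sup>1 = x\<^sup>k \<circ> x \<subseteq> I\<close> and \<open>\<alpha> x \<notin> I\<close> force every element of \<open>x\<^sup>k\<close>
  into \<open>I\<close>; descending to \<open>x\<^sup>1 = {x}\<close> reduces to the first case.\<close>

lemma alpha_prime_alpha_mem:
  assumes "hcomm m" and "has_identity m" and "alpha_prime m \<alpha> I" and "x \<in> I"
  shows "\<alpha> x \<in> I"
proof -
  obtain e where e: "\<And>a. a \<in> m e a"
    using \<open>has_identity m\<close> unfolding has_identity_def by blast
  have ideal: "hyperideal m I"
    using \<open>alpha_prime m \<alpha> I\<close> unfolding alpha_prime_def by blast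
  have "m e x \<subseteq> I"
    using ideal \<open>x \<in> I\<close> unfolding hyperideal_def by blast
  then consider "e \<in> I" | "\<alpha> x \<in> I"
    using \<open>alpha_prime m \<alpha> I\<close> unfolding alpha_prime_def by blast
  then show ?thesis
  proof cases
    case 1
    then have "m (\<alpha> x) e \<subseteq> I"
      using ideal unfolding hyperideal_def by blast
    moreover have "\<alpha> x \<in> m (\<alpha> x) e"
      using e \<open>hcomm m\<close> unfolding hcomm_def by metis
    ultimately show ?thesis by blast
  qed
qed

lemma alpha_prime_hpow_aux_Suc_subset:
  assumes "alpha_prime m \<alpha> I" and "\<alpha> x \<notin> I" and "hpow_aux m x (Suc k) \<subseteq> I"
  shows "hpow_aux m x k \<subseteq> I"
proof
  fix y
  assume "y \<in> hpow_aux m x k"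
  then have "m y x \<subseteq> I"
    using \<open>hpow_aux m x (Suc k) \<subseteq> I\<close> by (auto simp: hset_prod_def)
  then show "y \<in> I"
    using assms(1,2) unfolding alpha_prime_def by blast
qed

lemma alpha_prime_hpow_aux_subset:
  assumes "hcomm m" and "has_identity m" and "alpha_prime m \<alpha> I"
    and "hpow_aux m x k \<subseteq> I"
  shows "\<alpha> x \<in> I"
  using \<open>hpow_aux m x k \<subseteq> I\<close>
proof (induction k)
  case 0
  then show ?case
    using alpha_prime_alpha_mem[OF assms(1-3)] by simp
next
  case (Suc k)
  then show ?case
    using alpha_prime_hpow_aux_Suc_subset[OF \<open>alpha_prime m \<alpha> I\<close>] by blast
qed

theorem mainTheorem8:
  fixes m :: "'a::ab_group_add \<Rightarrow> 'a \<Rightarrow> 'a set"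
    and \<alpha> :: "'a \<Rightarrow> 'a" and I :: "'a set" and x :: 'a and n :: nat
  assumes "mult_hyperring m" and "hcomm m" and "has_identity m"
    and "\<forall>J. hyperideal m J \<longrightarrow> C_hyperideal m J"
    and "good_endo m \<alpha>" and "alpha_prime m \<alpha> I"
    and "n \<ge> 1" and "hpow m x n \<subseteq> I"
  shows "\<alpha> x \<in> I"
  using alpha_prime_hpow_aux_subset[OF assms(2,3,6)] assms(8)
  unfolding hpow_def by blast

end
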